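(* Let $D$ be an arc-colored complete digraph of order $n\geq 4$. If $D$ contains no rainbow triangle, then there is a vertex $v\in V(D)$ with $d^{s}(v)\leq\lfloor\frac{n}{2}\rfloor$.
   Context: The complete digraph on $n$ vertices has both arcs $xy,yx$ for every pair of distinct vertices. An arc-coloring is any map $C:A(D)\to\mathbb{N}$. A rainbow triangle is a directed 3-cycle with pairwise distinct arc colors. A color $c$ used in $D$ is saturated by $v$ if every arc of color $c$ is incident to $v$; $d^{s}(v)$ is the number of colors saturated by $v$. *)

theory Defs
  imports Main
begin

text \<open>An arc-colouring is a map C :: 'a \<Rightarrow> 'a \<Rightarrow> nat, where
C x y is the colour of arc xy (values off the arc set are irrelevant).\<close>

definition arcs :: "'a set \<Rightarrow> ('a \<times> 'a) set" where
  "arcs V = {(x, y). x \<in> V \<and> y \<in> V \<and> x \<noteq> y}"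

definition colours_used :: "'a set \<Rightarrow> ('a \<Rightarrow> 'a \<Rightarrow> nat) \<Rightarrow> nat set" where
  "colours_used V C = (\<lambda>(x, y). C x y) ` arcs V"

definition rainbow_triangle :: "'a set \<Rightarrow> ('a \<Rightarrow> 'a \<Rightarrow> nat) \<Rightarrow> 'a \<Rightarrow> 'a \<Rightarrow> 'a \<Rightarrow> bool" where
  "rainbow_triangle V C x y z \<longleftrightarrow>
     x \<in> V \<and> y \<in> V \<and> z \<in> V \<and> x \<noteq> y \<and> y \<noteq> z \<and> x \<noteq> z \<and>
     C x y \<noteq> C y z \<and> C y z \<noteq> C z x \<and> C x y \<noteq> C z x"

definition saturated_by :: "'a set \<Rightarrow> ('a \<Rightarrow> 'a \<Rightarrow> nat) \<Rightarrow> nat \<Rightarrow> 'a \<Rightarrow> bool" where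
  "saturated_by V C c v \<longleftrightarrow>
     c \<in> colours_used V C \<and> (\<forall>(x, y) \<in> arcs V. C x y = c \<longrightarrow> x = v \<or> y = v)"

definition sat_degree :: "'a set \<Rightarrow> ('a \<Rightarrow> 'a \<Rightarrow> nat) \<Rightarrow> 'a \<Rightarrow> nat" where
  "sat_degree V C v = card {c. saturated_by V C c v}"

end

theory Submission
  imports Defs
begin

text \<open>Every colour saturated by v lies on an out-arc or on an in-arc of v; call v
out-saturated (in-saturated) if it saturates the colour of one of its out-arcs (in-arcs).
In a rainbow-free colouring, a saturated out-colour C v u and a saturated in-colour C w v
with u \<noteq> w coincide, because C u w is a third colour on the triangle v u w; consequently
a vertex saturating at least three colours is out-saturated or in-saturated, but not both.
If v is not in-saturated, then for every out-neighbour u with C v u saturated by v the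
vertex u must be in-saturated: otherwise a colour saturated by u on an arc uy, y \<noteq> v,
yields the rainbow triangle v u y. Hence v saturates at most as many colours as there are
in-saturated vertices, and symmetrically (reverse all arcs). If every vertex saturated more
than n div 2 colours, both classes would thus have more than n div 2 vertices.\<close>

definition rainbow_free :: "'a set \<Rightarrow> ('a \<Rightarrow> 'a \<Rightarrow> nat) \<Rightarrow> bool" where
  "rainbow_free V C \<longleftrightarrow> \<not> (\<exists>x y z. rainbow_triangle V C x y z)"

definition out_saturated :: "'a set \<Rightarrow> ('a \<Rightarrow> 'a \<Rightarrow> nat) \<Rightarrow> 'a \<Rightarrow> bool" where
  "out_saturated V C v \<longleftrightarrow> (\<exists>u\<in>V. u \<noteq> v \<and> saturated_by V C (C v u) v)"

definition in_saturated :: "'a set \<Rightarrow> ('a \<Rightarrow> 'a \<Rightarrow> nat) \<Rightarrow> 'a \<Rightarrow> bool" where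
  "in_saturated V C v \<longleftrightarrow> (\<exists>u\<in>V. u \<noteq> v \<and> saturated_by V C (C u v) v)"

lemma rainbow_freeD:
  assumes "rainbow_free V C" "x \<in> V" "y \<in> V" "z \<in> V" "x \<noteq> y" "y \<noteq> z" "x \<noteq> z"
  shows "C x y = C y z \<or> C y z = C z x \<or> C x y = C z x"
  using assms unfolding rainbow_free_def rainbow_triangle_def by blast

lemma saturated_by_arc_incident:
  assumes "saturated_by V C c v" "x \<in> V" "y \<in> V" "x \<noteq> y" "C x y = c"
  shows "x = v \<or> y = v"
  using assms unfolding saturated_by_def arcs_def by auto

lemma saturated_byE:
  assumes "saturated_by V C c v"
  obtains (out) y where "y \<in> V" "y \<noteq> v" "c = C v y"
        | (into) y where "y \<in> V" "y \<noteq> v" "c = C y v"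
proof -
  obtain x y where xy: "x \<in> V" "y \<in> V" "x \<noteq> y" "c = C x y"
    using assms unfolding saturated_by_def colours_used_def arcs_def by auto
  then have "x = v \<or> y = v"
    using saturated_by_arc_incident[OF assms] by blast
  with xy that show thesis by auto
qed

lemma out_or_in_saturated:
  assumes "0 < sat_degree V C v"
  shows "out_saturated V C v \<or> in_saturated V C v"
proof -
  obtain c where "saturated_by V C c v"
    using assms card.empty unfolding sat_degree_def by fastforce
  then show ?thesis
  proof (cases rule: saturated_byE)
    case (out y)
    then show ?thesis using \<open>saturated_by V C c v\<close> unfolding out_saturated_def by auto
  next
    case (into y)
    then show ?thesis using \<open>saturated_by V C c v\<close> unfolding in_saturated_def by auto
  qed
qed

definition reverse_colouring :: "('a \<Rightarrow> 'a \<Rightarrow> nat) \<Rightarrow> 'a \<Rightarrow> 'a \<Rightarrow> nat" where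
  "reverse_colouring C x y = C y x"

lemma arcs_swap: "prod.swap ` arcs V = arcs V"
  unfolding arcs_def by force

lemma colours_used_reverse [simp]:
  "colours_used V (reverse_colouring C) = colours_used V C"
proof -
  have "colours_used V (reverse_colouring C) = (\<lambda>(x, y). C x y) ` prod.swap ` arcs V"
    unfolding colours_used_def image_image by (simp add: case_prod_beta reverse_colouring_def)
  then show ?thesis by (simp only: arcs_swap colours_used_def)
qed

lemma saturated_by_reverse [simp]:
  "saturated_by V (reverse_colouring C) c v \<longleftrightarrow> saturated_by V C c v"
  unfolding saturated_by_def colours_used_reverse by (auto simp: arcs_def reverse_colouring_def)

lemma sat_degree_reverse [simp]: "sat_degree V (reverse_colouring C) v = sat_degree V C v"
  by (simp add: sat_degree_def)

lemma in_saturated_reverse [simp]: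
  "in_saturated V (reverse_colouring C) v \<longleftrightarrow> out_saturated V C v"
  by (simp add: in_saturated_def out_saturated_def reverse_colouring_def)

lemma rainbow_triangle_reverse:
  "rainbow_triangle V (reverse_colouring C) x y z \<longleftrightarrow> rainbow_triangle V C x z y"
  unfolding rainbow_triangle_def reverse_colouring_def by auto

lemma rainbow_free_reverse [simp]:
  "rainbow_free V (reverse_colouring C) \<longleftrightarrow> rainbow_free V C"
  unfolding rainbow_free_def rainbow_triangle_reverse by blast

lemma saturated_out_in_eq:
  assumes rf: "rainbow_free V C" and "v \<in> V" "u \<in> V" "w \<in> V" "u \<noteq> v" "w \<noteq> v" "u \<noteq> w"
    and out: "saturated_by V C (C v u) v" and into: "saturated_by V C (C w v) v"
  shows "C v u = C w v"
proof -
  have "C u w \<noteq> C v u" using saturated_by_arc_incident[OF out, of u w] assms by auto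
  moreover have "C u w \<noteq> C w v" using saturated_by_arc_incident[OF into, of u w] assms by auto
  ultimately show ?thesis using rainbow_freeD[OF rf, of v u w] assms by auto
qed

lemma saturated_subset_out_in:
  assumes rf: "rainbow_free V C" and "v \<in> V" "u \<in> V" "w \<in> V" "u \<noteq> v" "w \<noteq> v"
    and out: "saturated_by V C (C v u) v" and into: "saturated_by V C (C w v) v"
  shows "{c. saturated_by V C c v} \<subseteq> {C v u, C w v, C v w, C u v}"
proof
  fix c assume "c \<in> {c. saturated_by V C c v}"
  then have c: "saturated_by V C c v" by simp
  then show "c \<in> {C v u, C w v, C v w, C u v}"
  proof (cases rule: saturated_byE)
    case (out y)
    then show ?thesis
      using saturated_out_in_eq[OF rf, of v y w] c into assms by (cases "y = w") auto
  next
    case (into x)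
    then show ?thesis
      using saturated_out_in_eq[OF rf, of v u x] c out assms by (cases "x = u") auto
  qed
qed

lemma not_out_and_in_saturated:
  assumes rf: "rainbow_free V C" and v: "v \<in> V" and three: "3 \<le> sat_degree V C v"
  shows "\<not> (out_saturated V C v \<and> in_saturated V C v)"
proof
  let ?S = "{c. saturated_by V C c v}"
  assume "out_saturated V C v \<and> in_saturated V C v"
  then obtain u w where u: "u \<in> V" "u \<noteq> v" "saturated_by V C (C v u) v"
    and w: "w \<in> V" "w \<noteq> v" "saturated_by V C (C w v) v"
    unfolding out_saturated_def in_saturated_def by blast
  have S: "?S \<subseteq> {C v u, C w v, C v w, C u v}"
    using saturated_subset_out_in[OF rf v u(1) w(1) u(2) w(2) u(3) w(3)] .
  have "\<exists>a b. ?S \<subseteq> {a, b}"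
  proof (cases "u = w")
    case True
    then show ?thesis using S by auto
  next
    case False
    then have "C v u = C w v" using saturated_out_in_eq[OF rf v u(1) w(1)] u w by blast
    moreover have "C v w \<in> ?S \<Longrightarrow> C u v \<in> ?S \<Longrightarrow> C v w = C u v"
      using saturated_out_in_eq[OF rf v w(1) u(1)] False u w by simp
    ultimately show ?thesis using S by blast
  qed
  then obtain a b where "?S \<subseteq> {a, b}" by blast
  moreover have "card {a, b} \<le> 2" by (simp add: card_insert_if)
  ultimately have "sat_degree V C v \<le> 2"
    unfolding sat_degree_def using card_mono[of "{a, b}" ?S] by simp
  with three show False by simp
qed

lemma sat_degree_le_card_in_saturated:
  assumes rf: "rainbow_free V C" and fin: "finite V" and v: "v \<in> V"
    and not_in: "\<not> in_saturated V C v" and two: "\<forall>u\<in>V. 2 \<le> sat_degree V C u"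
  shows "sat_degree V C v \<le> card {u \<in> V. in_saturated V C u}"
proof -
  let ?S = "\<lambda>x. {c. saturated_by V C c x}"
  define A where "A = {u \<in> V. u \<noteq> v \<and> saturated_by V C (C v u) v}"
  have "?S v \<subseteq> C v ` A"
  proof
    fix c assume "c \<in> ?S v"
    then have c: "saturated_by V C c v" by simp
    then show "c \<in> C v ` A"
    proof (cases rule: saturated_byE)
      case (out y)
      then show ?thesis using c unfolding A_def by auto
    next
      case (into y)
      then show ?thesis using c not_in unfolding in_saturated_def by auto
    qed
  qed
  moreover have "A \<subseteq> {u \<in> V. in_saturated V C u}"
  proof
    fix u assume "u \<in> A"
    then have u: "u \<in> V" "u \<noteq> v" and vu: "saturated_by V C (C v u) v"
      unfolding A_def by auto
    show "u \<in> {u \<in> V. in_saturated V C u}"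
    proof (rule ccontr)
      assume "u \<notin> {u \<in> V. in_saturated V C u}"
      with u have not_in_u: "\<not> in_saturated V C u" by simp
      have "\<not> ?S u \<subseteq> {C u v}"
        using two u(1) card_mono[of "{C u v}" "?S u"] by (auto simp: sat_degree_def)
      then obtain e where e: "saturated_by V C e u" "e \<noteq> C u v" by auto
      from e(1) obtain y where y: "y \<in> V" "y \<noteq> u" "e = C u y"
      proof (cases rule: saturated_byE)
        case (out y)
        with that show ?thesis .
      next
        case (into y)
        then show ?thesis using e(1) not_in_u unfolding in_saturated_def by auto
      qed
      have "y \<noteq> v" using y e by auto
      have "C v u \<noteq> C u y"
        using saturated_by_arc_incident[OF vu, of u y] u y \<open>y \<noteq> v\<close> by auto
      moreover have "C u y \<noteq> C y v"
        using saturated_by_arc_incident[OF e(1), of y v] u y \<open>y \<noteq> v\<close> v by auto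
      moreover have "C y v \<noteq> C v u"
        using not_in vu y \<open>y \<noteq> v\<close> unfolding in_saturated_def by auto
      ultimately show False
        using rainbow_freeD[OF rf v u(1) y(1)] u y \<open>y \<noteq> v\<close> by auto
    qed
  qed
  moreover have "finite A" using fin unfolding A_def by simp
  ultimately have "sat_degree V C v \<le> card A"
    unfolding sat_degree_def by (meson card_image_le card_mono finite_imageI le_trans)
  also have "\<dots> \<le> card {u \<in> V. in_saturated V C u}"
    using \<open>A \<subseteq> _\<close> fin by (intro card_mono) auto
  finally show ?thesis .
qed

lemma sat_degree_le_card_out_saturated:
  assumes "rainbow_free V C" "finite V" "v \<in> V"
    and "\<not> out_saturated V C v" "\<forall>u\<in>V. 2 \<le> sat_degree V C u"
  shows "sat_degree V C v \<le> card {u \<in> V. out_saturated V C u}"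
  using sat_degree_le_card_in_saturated[of V "reverse_colouring C" v] assms by simp

lemma card_out_saturated_plus_card_in_saturated_le:
  assumes rf: "rainbow_free V C" and fin: "finite V" and three: "\<forall>v\<in>V. 3 \<le> sat_degree V C v"
  shows "card {v \<in> V. out_saturated V C v} + card {v \<in> V. in_saturated V C v} \<le> card V"
proof -
  let ?P = "{v \<in> V. out_saturated V C v}" and ?Q = "{v \<in> V. in_saturated V C v}"
  have "?P \<inter> ?Q = {}"
    using not_out_and_in_saturated[OF rf] three by blast
  then have "card ?P + card ?Q = card (?P \<union> ?Q)"
    using fin by (simp add: card_Un_disjoint)
  also have "\<dots> \<le> card V"
    using fin by (intro card_mono) auto
  finally show ?thesis .
qed

theorem lemma2:
  fixes V :: "'a set" and C :: "'a \<Rightarrow> 'a \<Rightarrow> nat"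
  assumes "finite V" and "card V \<ge> 4"
    and "\<not> (\<exists>x y z. rainbow_triangle V C x y z)"
  shows "\<exists>v \<in> V. sat_degree V C v \<le> card V div 2"
proof (rule ccontr)
  let ?k = "card V div 2"
  define P where "P = {v \<in> V. out_saturated V C v}"
  define Q where "Q = {v \<in> V. in_saturated V C v}"
  assume "\<not> ?thesis"
  then have big: "?k < sat_degree V C v" if "v \<in> V" for v
    using that by (simp add: not_le)
  have rf: "rainbow_free V C" using assms(3) unfolding rainbow_free_def .
  have three: "\<forall>v\<in>V. 3 \<le> sat_degree V C v" and two: "\<forall>v\<in>V. 2 \<le> sat_degree V C v"
    using big assms(2) by fastforce+
  have Q_big: "?k < card Q" if "v \<in> P" for v
    using that big[of v] sat_degree_le_card_in_saturated[OF rf assms(1) _ _ two, of v]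
      not_out_and_in_saturated[OF rf _ bspec[OF three]] unfolding P_def Q_def by fastforce
  have P_big: "?k < card P" if "v \<in> Q" for v
    using that big[of v] sat_degree_le_card_out_saturated[OF rf assms(1) _ _ two, of v]
      not_out_and_in_saturated[OF rf _ bspec[OF three]] unfolding P_def Q_def by fastforce
  obtain v where "v \<in> V" using assms(2) by fastforce
  then have "v \<in> P \<union> Q"
    using out_or_in_saturated[of V C v] big[of v] unfolding P_def Q_def by auto
  then have "?k < card P" "?k < card Q"
    using P_big Q_big by (metis Un_iff card.empty ex_in_conv not_less_zero)+
  moreover have "card P + card Q \<le> card V"
    unfolding P_def Q_def using card_out_saturated_plus_card_in_saturated_le[OF rf assms(1) three] .
  ultimately show False by linarith
qed

end
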